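(* Let $\beta\in(\frac{1+\sqrt5}{2},2)$. Suppose the quasi-greedy orbit of $1$ hits $\beta^{-1}(\beta-1)^{-1}$ for the first time, i.e. there is a minimal $k\ge1$ with $Q^k(1)=\beta^{-1}(\beta-1)^{-1}$ and $Q^i(1)\in[0,\beta^{-1})\cup(\beta^{-1}(\beta-1)^{-1},(\beta-1)^{-1}]$ for $1\le i\le k-1$. Then the greedy $\beta$-expansion of $1$ is finite, and there exist $n_0\ge1$ and a word $a_1\cdots a_{n_0}\in\{0,1\}^{n_0}$ with $a_{n_0}=1$ such that the quasi-greedy expansion of $1$ is $(\eta_i)=\big(a_1\cdots a_{n_0}\,\overline{a_1\cdots a_{n_0}}\big)^\infty$.
   Context: For $x\in[0,(\beta-1)^{-1}]$, a $\beta$-expansion of $x$ is $(a_n)\in\{0,1\}^{\mathbb{N}}$ with $x=\sum_n a_n\beta^{-n}$. The greedy map $G$ on $[0,(\beta-1)^{-1}]$ is $G(x)=\beta x \bmod 1$ for $x\in[0,1)$ and $G(x)=\beta x-1$ for $x\in[1,(\beta-1)^{-1}]$; the greedy expansion of $x$ has digits $a_n=\lfloor\beta G^{n-1}(x)\rfloor$. The quasi-greedy expansion $(\eta_i)$ of $1$ equals the greedy expansion of $1$ if the latter is infinite (does not end in $0^\infty$); if the greedy expansion is $a_1\cdots a_n0^\infty$ with $a_n=1$, then $(\eta_i)=(a_1\cdots a_{n-1}(a_n-1))^\infty$. The quasi-greedy orbit of $1$ is $Q^i(1)=\sum_{j\ge1}\eta_{i+j}\beta^{-j}$, $i\ge1$.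 For a word or sequence, the bar denotes the reflection $\overline{a}=1-a$ applied digitwise. *)

theory Defs
  imports Complex_Main
begin

definition greedy_map :: "real \<Rightarrow> real \<Rightarrow> real" where
  "greedy_map \<beta> x = (if x < 1 then \<beta> * x - of_int \<lfloor>\<beta> * x\<rfloor> else \<beta> * x - 1)"

text \<open>Greedy digits a_n = floor(beta G^(n-1) x), indexed from n = 1.\<close>
definition greedy_digit :: "real \<Rightarrow> real \<Rightarrow> nat \<Rightarrow> nat" where
  "greedy_digit \<beta> x n = nat \<lfloor>\<beta> * (greedy_map \<beta> ^^ (n - 1)) x\<rfloor>"

definition greedy_finite :: "real \<Rightarrow> bool" where
  "greedy_finite \<beta> \<longleftrightarrow> (\<exists>N. \<forall>n>N. greedy_digit \<beta> 1 n = 0)"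

definition greedy_len :: "real \<Rightarrow> nat" where
  "greedy_len \<beta> = (GREATEST n. n \<ge> 1 \<and> greedy_digit \<beta> 1 n \<noteq> 0)"

text \<open>Quasi-greedy expansion (eta_i) of 1, indexed from i = 1.\<close>
definition quasi_greedy :: "real \<Rightarrow> nat \<Rightarrow> nat" where
  "quasi_greedy \<beta> i =
     (if greedy_finite \<beta> then
        (let n = greedy_len \<beta>; j = (i - 1) mod n + 1 in
         if j = n then greedy_digit \<beta> 1 n - 1 else greedy_digit \<beta> 1 j)
      else greedy_digit \<beta> 1 i)"

definition Qorb :: "real \<Rightarrow> nat \<Rightarrow> real" where
  "Qorb \<beta> i = (\<Sum>j. real (quasi_greedy \<beta> (i + j + 1)) / \<beta> ^ (j + 1))"

end

theory Submission
  imports Defs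
begin

text \<open>
  Write \<open>u = 1/(\<beta>(\<beta>-1))\<close> and \<open>c = 1/(\<beta>-1)\<close>. Along the quasi-greedy orbit of 1 the next digit
  is forced to be 0 at points \<open>\<le> 1/\<beta>\<close> and forced to be 1 at points \<open>\<ge> u\<close>; the reflection
  \<open>x \<mapsto> c - x\<close> swaps these two zones and conjugates the dynamics while complementing the
  digits. Since \<open>\<beta> u - 1 = c - 1\<close>, once the orbit reaches \<open>u\<close> at time \<open>k\<close> it restarts as the
  mirror image of the orbit of 1, so the next \<open>k+1\<close> digits are the complements of the
  first \<open>k+1\<close>. The mirrored orbit ends at \<open>c - u = 1/\<beta>\<close>, whose successor is 1 again, which
  gives the period \<open>2(k+1)\<close>. The greedy expansion must be finite because the greedy orbit
  never returns to 1.
\<close>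

definition greedy_orbit :: "real \<Rightarrow> nat \<Rightarrow> real" where
  "greedy_orbit \<beta> n = (greedy_map \<beta> ^^ n) 1"

lemma greedy_orbit_0 [simp]: "greedy_orbit \<beta> 0 = 1"
  by (simp add: greedy_orbit_def)

lemma greedy_orbit_Suc: "greedy_orbit \<beta> (Suc n) = greedy_map \<beta> (greedy_orbit \<beta> n)"
  by (simp add: greedy_orbit_def)

lemma greedy_digit_Suc: "greedy_digit \<beta> 1 (Suc n) = nat \<lfloor>\<beta> * greedy_orbit \<beta> n\<rfloor>"
  by (simp add: greedy_digit_def greedy_orbit_def)

lemma expansion_sum_eq:
  fixes \<beta> :: real and e :: "nat \<Rightarrow> nat" and y :: "nat \<Rightarrow> real"
  assumes \<beta>: "1 < \<beta>" and e_le_1: "\<And>n. e (Suc n) \<le> 1"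
    and y_Suc: "\<And>n. y (Suc n) = \<beta> * y n - real (e (Suc n))"
    and y_bounded: "\<And>n. \<bar>y n\<bar> \<le> B"
  shows "(\<Sum>j. real (e (n + j + 1)) / \<beta> ^ (j + 1)) = y n"
proof -
  define S where "S n = (\<Sum>j. real (e (n + j + 1)) / \<beta> ^ (j + 1))" for n
  define G where "G = (\<Sum>j. (1/\<beta>) ^ j)"
  have geometric: "summable (\<lambda>j. (1/\<beta>) ^ j)"
    using \<beta> by (intro summable_geometric) simp
  have term_bounds: "0 \<le> real (e (n + j + 1)) / \<beta> ^ (j + 1)
      \<and> real (e (n + j + 1)) / \<beta> ^ (j + 1) \<le> (1/\<beta>) ^ j" for n j
  proof -
    have "real (e (n + j + 1)) / \<beta> ^ (j + 1) \<le> 1 / \<beta> ^ (j + 1)"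
      using e_le_1[of "n + j"] \<beta> by (intro divide_right_mono) auto
    also have "\<dots> \<le> 1 / \<beta> ^ j"
      using \<beta> by (intro divide_left_mono) (auto simp: power_increasing)
    finally show ?thesis using \<beta> by (simp add: power_one_over)
  qed
  have summable: "summable (\<lambda>j. real (e (n + j + 1)) / \<beta> ^ (j + 1))" for n
  proof (rule summable_comparison_test[OF _ geometric], intro exI[of _ 0] allI impI)
    show "norm (real (e (n + j + 1)) / \<beta> ^ (j + 1)) \<le> (1/\<beta>) ^ j" for j
      using term_bounds[of n j] by (metis abs_of_nonneg real_norm_def)
  qed
  have S_bounds: "0 \<le> S n \<and> S n \<le> G" for n
    unfolding S_def G_def using term_bounds summable geometric
    by (auto intro!: suminf_nonneg suminf_le)
  have S_Suc: "S (Suc n) = \<beta> * S n - real (e (Suc n))" for n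
  proof -
    have "S (Suc n) / \<beta> = (\<Sum>j. real (e (n + Suc j + 1)) / \<beta> ^ (Suc j + 1))"
      unfolding S_def by (subst suminf_divide[OF summable, symmetric]) (simp add: algebra_simps)
    also have "\<dots> = S n - real (e (Suc n)) / \<beta>"
      unfolding S_def by (subst suminf_split_head[OF summable]) simp
    finally show ?thesis using \<beta> by (simp add: field_simps)
  qed
  define D where "D n = S n - y n" for n
  have D_Suc: "D (Suc n) = \<beta> * D n" for n
    unfolding D_def S_Suc y_Suc by (simp add: algebra_simps)
  have D_add: "D (n + m) = \<beta> ^ m * D n" for m
    by (induction m) (simp_all add: D_Suc)
  have D_bounded: "\<bar>D m\<bar> \<le> G + B" for m
    using S_bounds[of m] y_bounded[of m] unfolding D_def by auto
  have "D n = 0"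
  proof (rule ccontr)
    assume "D n \<noteq> 0"
    obtain m where "(G + B) / \<bar>D n\<bar> < \<beta> ^ m"
      using real_arch_pow[OF \<beta>] by blast
    then have "G + B < \<bar>D (n + m)\<bar>"
      using \<open>D n \<noteq> 0\<close> \<beta> by (simp add: D_add abs_mult divide_less_eq)
    then show False using D_bounded[of "n + m"] by simp
  qed
  then show ?thesis unfolding D_def S_def by simp
qed

lemma golden_ratio_less_imp:
  fixes \<beta> :: real
  assumes "(1 + sqrt 5) / 2 < \<beta>"
  shows "1 < \<beta> * (\<beta> - 1)" and "1 < \<beta>"
proof -
  have "sqrt 5 < 2 * \<beta> - 1" using assms by (simp add: divide_less_eq)
  then have "sqrt 5 ^ 2 < (2 * \<beta> - 1) ^ 2"
    by (intro power_strict_mono) auto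
  then show *: "1 < \<beta> * (\<beta> - 1)" by (simp add: power2_eq_square algebra_simps)
  have "0 < (1 + sqrt 5) / 2" by (simp add: add_pos_nonneg)
  then have "0 < \<beta>" using assms by linarith
  with * show "1 < \<beta>" by (smt (verit) mult_le_cancel_left1)
qed

context
  fixes \<beta> :: real
  assumes beta_gt_1: "1 < \<beta>" and beta_lt_2: "\<beta> < 2"
begin

lemma floor_beta: "\<lfloor>\<beta>\<rfloor> = 1"
  using beta_gt_1 beta_lt_2 by (simp add: floor_eq_iff)

lemma greedy_orbit_less_1: "1 \<le> n \<Longrightarrow> 0 \<le> greedy_orbit \<beta> n \<and> greedy_orbit \<beta> n < 1"
proof (induction n)
  case (Suc m)
  show ?case
  proof (cases "m = 0")
    case True
    then show ?thesis using beta_gt_1 beta_lt_2 by (simp add: greedy_orbit_Suc greedy_map_def)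
  next
    case False
    then have "greedy_orbit \<beta> m < 1" using Suc by simp
    moreover have "\<beta> * greedy_orbit \<beta> m - of_int \<lfloor>\<beta> * greedy_orbit \<beta> m\<rfloor> < 1"
      using real_of_int_floor_add_one_gt[of "\<beta> * greedy_orbit \<beta> m"] by linarith
    ultimately show ?thesis
      using of_int_floor_le[of "\<beta> * greedy_orbit \<beta> m"] by (simp add: greedy_orbit_Suc greedy_map_def)
  qed
qed simp

lemma greedy_orbit_bounds: "0 \<le> greedy_orbit \<beta> n \<and> greedy_orbit \<beta> n \<le> 1"
  using greedy_orbit_less_1[of n] by (cases n) auto

lemma greedy_digit_le_1: "greedy_digit \<beta> 1 (Suc n) \<le> 1"
proof -
  have "\<beta> * greedy_orbit \<beta> n \<le> \<beta>"
    using greedy_orbit_bounds[of n] beta_gt_1 by (simp add: mult_left_le)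
  then have "\<lfloor>\<beta> * greedy_orbit \<beta> n\<rfloor> \<le> 1"
    using beta_lt_2 by (simp add: floor_le_iff)
  then show ?thesis unfolding greedy_digit_Suc by (simp add: nat_le_iff)
qed

lemma greedy_orbit_Suc_digit:
  "greedy_orbit \<beta> (Suc n) = \<beta> * greedy_orbit \<beta> n - real (greedy_digit \<beta> 1 (Suc n))"
proof (cases "greedy_orbit \<beta> n < 1")
  case True
  then show ?thesis using greedy_orbit_bounds[of n] beta_gt_1
    by (simp add: greedy_orbit_Suc greedy_digit_Suc greedy_map_def)
next
  case False
  then have "greedy_orbit \<beta> n = 1" using greedy_orbit_bounds[of n] by simp
  then show ?thesis by (simp add: greedy_orbit_Suc greedy_digit_Suc greedy_map_def floor_beta)
qed

lemma greedy_orbit_eq_0_absorbing: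
  assumes "greedy_orbit \<beta> n = 0" and "n \<le> m"
  shows "greedy_orbit \<beta> m = 0 \<and> greedy_digit \<beta> 1 (Suc m) = 0"
  using assms(2)
proof (induction m rule: dec_induct)
  case base
  then show ?case using assms(1) by (simp add: greedy_digit_Suc)
next
  case (step m)
  then show ?case using greedy_orbit_Suc_digit[of m] by (simp add: greedy_digit_Suc)
qed

lemma greedy_orbit_pos_if_infinite:
  assumes "\<not> greedy_finite \<beta>"
  shows "0 < greedy_orbit \<beta> n"
proof (rule ccontr)
  assume "\<not> 0 < greedy_orbit \<beta> n"
  then have "greedy_orbit \<beta> n = 0" using greedy_orbit_bounds[of n] by simp
  then have "greedy_digit \<beta> 1 m = 0" if "n < m" for m
    using greedy_orbit_eq_0_absorbing[of n "m - 1"] that by (cases m) auto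
  then show False using assms unfolding greedy_finite_def by blast
qed

lemma greedy_len:
  assumes "greedy_finite \<beta>"
  shows "1 \<le> greedy_len \<beta>" and "greedy_digit \<beta> 1 (greedy_len \<beta>) = 1"
    and "greedy_len \<beta> < n \<Longrightarrow> greedy_digit \<beta> 1 n = 0"
proof -
  define P where "P n \<longleftrightarrow> 1 \<le> n \<and> greedy_digit \<beta> 1 n \<noteq> 0" for n
  obtain N where N: "\<forall>n>N. greedy_digit \<beta> 1 n = 0"
    using assms unfolding greedy_finite_def by blast
  have P_bound: "P n \<Longrightarrow> n \<le> N" for n using N unfolding P_def by (meson not_less)
  have "P 1"
    using greedy_digit_Suc[of \<beta> 0] floor_beta unfolding P_def by simp
  then have "P (greedy_len \<beta>)"
    unfolding greedy_len_def P_def[symmetric] by (rule GreatestI_nat[OF _ P_bound])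
  then show "1 \<le> greedy_len \<beta>" and "greedy_digit \<beta> 1 (greedy_len \<beta>) = 1"
    using greedy_digit_le_1[of "greedy_len \<beta> - 1"] unfolding P_def by auto
  show "greedy_digit \<beta> 1 n = 0" if "greedy_len \<beta> < n"
  proof (rule ccontr)
    assume "greedy_digit \<beta> 1 n \<noteq> 0"
    then have "n \<le> greedy_len \<beta>"
      using that unfolding greedy_len_def P_def[symmetric]
      by (intro Greatest_le_nat[OF _ P_bound]) (simp_all add: P_def)
    then show False using that by simp
  qed
qed

lemma greedy_orbit_greedy_len:
  assumes "greedy_finite \<beta>"
  shows "greedy_orbit \<beta> (greedy_len \<beta>) = 0"
proof (rule ccontr)
  let ?L = "greedy_len \<beta>"
  have add: "greedy_orbit \<beta> (?L + m) = \<beta> ^ m * greedy_orbit \<beta> ?L" for m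
    by (induction m) (simp_all add: greedy_orbit_Suc_digit greedy_len(3)[OF assms])
  assume "greedy_orbit \<beta> ?L \<noteq> 0"
  then have pos: "0 < greedy_orbit \<beta> ?L" using greedy_orbit_bounds[of ?L] by simp
  obtain m where "1 / greedy_orbit \<beta> ?L < \<beta> ^ m" using real_arch_pow[OF beta_gt_1] by blast
  then have "1 < greedy_orbit \<beta> (?L + m)" using pos by (simp add: add divide_less_eq)
  then show False using greedy_orbit_bounds[of "?L + m"] by simp
qed

lemma greedy_orbit_pos_before_len:
  assumes "greedy_finite \<beta>" and "r < greedy_len \<beta>"
  shows "0 < greedy_orbit \<beta> r"
proof (rule ccontr)
  assume "\<not> 0 < greedy_orbit \<beta> r"
  then have "greedy_orbit \<beta> r = 0" using greedy_orbit_bounds[of r] by simp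
  then have "greedy_digit \<beta> 1 (Suc (greedy_len \<beta> - 1)) = 0"
    using assms(2) by (intro conjunct2[OF greedy_orbit_eq_0_absorbing]) auto
  then show False using greedy_len[OF assms(1)] by simp
qed

lemma Qorb_eq_greedy_orbit:
  assumes "\<not> greedy_finite \<beta>"
  shows "Qorb \<beta> n = greedy_orbit \<beta> n"
  unfolding Qorb_def
proof (rule expansion_sum_eq[OF beta_gt_1, where B = 1])
  show "quasi_greedy \<beta> (Suc n) \<le> 1" for n
    using assms greedy_digit_le_1 by (simp add: quasi_greedy_def)
  show "greedy_orbit \<beta> (Suc n) = \<beta> * greedy_orbit \<beta> n - real (quasi_greedy \<beta> (Suc n))" for n
    using assms greedy_orbit_Suc_digit by (simp add: quasi_greedy_def)
  show "\<bar>greedy_orbit \<beta> n\<bar> \<le> 1" for n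
    using greedy_orbit_bounds[of n] by simp
qed

text \<open>For a finite greedy expansion of length \<open>L\<close> the quasi-greedy orbit is the greedy orbit
  made periodic: lowering the last digit lands in 1 instead of 0.\<close>

lemma quasi_greedy_orbit_Suc:
  assumes "greedy_finite \<beta>"
  defines "y \<equiv> \<lambda>m. greedy_orbit \<beta> (m mod greedy_len \<beta>)"
  shows "y (Suc m) = \<beta> * y m - real (quasi_greedy \<beta> (Suc m))"
    and "quasi_greedy \<beta> (Suc m) \<le> 1"
proof -
  let ?L = "greedy_len \<beta>"
  have digit: "quasi_greedy \<beta> (Suc m) = (if Suc (m mod ?L) = ?L then 0
      else greedy_digit \<beta> 1 (Suc (m mod ?L)))"
    using assms(1) greedy_len(2)[OF assms(1)] by (simp add: quasi_greedy_def Let_def)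
  then show "quasi_greedy \<beta> (Suc m) \<le> 1" using greedy_digit_le_1 by simp
  show "y (Suc m) = \<beta> * y m - real (quasi_greedy \<beta> (Suc m))"
  proof (cases "Suc (m mod ?L) = ?L")
    case True
    then have "0 = \<beta> * greedy_orbit \<beta> (m mod ?L) - 1"
      using greedy_orbit_Suc_digit[of "m mod ?L"] greedy_len[OF assms(1)]
        greedy_orbit_greedy_len[OF assms(1)] by simp
    then show ?thesis using True digit unfolding y_def by (simp add: mod_Suc)
  next
    case False
    then show ?thesis
      using greedy_orbit_Suc_digit[of "m mod ?L"] digit unfolding y_def by (simp add: mod_Suc)
  qed
qed

lemma Qorb_eq_greedy_orbit_mod:
  assumes "greedy_finite \<beta>"
  shows "Qorb \<beta> n = greedy_orbit \<beta> (n mod greedy_len \<beta>)"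
  unfolding Qorb_def using greedy_orbit_bounds
  by (intro expansion_sum_eq[OF beta_gt_1, where B = 1] quasi_greedy_orbit_Suc[OF assms]) auto

end

locale unit_orbit =
  fixes \<beta> :: real and e :: "nat \<Rightarrow> nat" and Q :: "nat \<Rightarrow> real"
  assumes beta_gt_golden: "(1 + sqrt 5) / 2 < \<beta>" and beta_lt_2: "\<beta> < 2"
    and Q_0: "Q 0 = 1" and Q_Suc: "Q (Suc n) = \<beta> * Q n - real (e (Suc n))"
    and digit_le_1: "e (Suc n) \<le> 1" and Q_pos: "0 < Q n" and Q_le_1: "Q n \<le> 1"
begin

lemma beta_gt_1: "1 < \<beta>"
  using golden_ratio_less_imp(2)[OF beta_gt_golden] .

abbreviation u :: real where "u \<equiv> 1 / (\<beta> * (\<beta> - 1))"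

abbreviation c :: real where "c \<equiv> 1 / (\<beta> - 1)"

lemma u_less_1: "u < 1"
  using golden_ratio_less_imp(1)[OF beta_gt_golden] by simp

lemma c_gt_1: "1 < c"
  using beta_gt_1 beta_lt_2 by (simp add: field_simps)

lemma mult_u: "\<beta> * u = c"
  using beta_gt_1 by (simp add: field_simps)

lemma mult_c_minus_1: "\<beta> * c - 1 = c"
  using beta_gt_1 by (simp add: field_simps)

lemma c_minus_inverse: "c - 1 / \<beta> = u"
  using beta_gt_1 by (simp add: field_simps)

definition forced :: "real \<Rightarrow> bool" where
  "forced x \<longleftrightarrow> x \<le> 1 / \<beta> \<or> u \<le> x"

lemma digit_eq_0:
  assumes "Q n \<le> 1 / \<beta>"
  shows "e (Suc n) = 0"
proof (rule ccontr)
  assume "e (Suc n) \<noteq> 0"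
  then have "e (Suc n) = 1" using digit_le_1[of n] by simp
  moreover have "\<beta> * Q n \<le> \<beta> * (1 / \<beta>)"
    using assms beta_gt_1 by (intro mult_left_mono) auto
  ultimately have "Q (Suc n) \<le> 0" using Q_Suc[of n] beta_gt_1 by simp
  then show False using Q_pos[of "Suc n"] by simp
qed

lemma digit_eq_1:
  assumes "u \<le> Q n"
  shows "e (Suc n) = 1"
proof (rule ccontr)
  assume "e (Suc n) \<noteq> 1"
  then have "e (Suc n) = 0" using digit_le_1[of n] by simp
  moreover have "\<beta> * u \<le> \<beta> * Q n"
    using assms beta_gt_1 by (intro mult_left_mono) auto
  ultimately have "c \<le> Q (Suc n)" using Q_Suc[of n] mult_u by simp
  then show False using Q_le_1[of "Suc n"] c_gt_1 by simp
qed

lemma forced_reflect: "forced x \<Longrightarrow> forced (c - x)"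
  using c_minus_inverse unfolding forced_def by auto

lemma Q_Suc_eq_if_forced:
  assumes "Q p = Q q" and "forced (Q q)"
  shows "e (Suc p) = e (Suc q) \<and> Q (Suc p) = Q (Suc q)"
  using assms digit_eq_0[of p] digit_eq_0[of q] digit_eq_1[of p] digit_eq_1[of q] Q_Suc
  unfolding forced_def by auto

lemma Q_Suc_reflect_if_forced:
  assumes "Q p = c - Q q" and "forced (Q q)"
  shows "e (Suc p) = 1 - e (Suc q) \<and> Q (Suc p) = c - Q (Suc q)"
proof (cases "Q q \<le> 1 / \<beta>")
  case True
  then have "e (Suc q) = 0" by (rule digit_eq_0)
  moreover have "e (Suc p) = 1"
    using True assms(1) c_minus_inverse by (intro digit_eq_1) linarith
  moreover have "\<beta> * (c - Q q) - 1 = c - \<beta> * Q q"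
    using mult_c_minus_1 by (simp add: algebra_simps)
  ultimately show ?thesis using Q_Suc[of p] Q_Suc[of q] assms(1) by simp
next
  case False
  then have "u \<le> Q q" using assms(2) unfolding forced_def by simp
  then have "e (Suc q) = 1" by (rule digit_eq_1)
  moreover have "e (Suc p) = 0"
    using \<open>u \<le> Q q\<close> assms(1) c_minus_inverse by (intro digit_eq_0) linarith
  moreover have "\<beta> * (c - Q q) = c - (\<beta> * Q q - 1)"
    using mult_c_minus_1 by (simp add: algebra_simps)
  ultimately show ?thesis using Q_Suc[of p] Q_Suc[of q] assms(1) by simp
qed

lemma Q_reflect_run:
  assumes "Q p = c - Q q" and "\<forall>i<n. forced (Q (q + i))"
  shows "i \<le> n \<Longrightarrow> Q (p + i) = c - Q (q + i)"
    and "i < n \<Longrightarrow> e (Suc (p + i)) = 1 - e (Suc (q + i))"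
proof -
  show Q_run: "i \<le> n \<Longrightarrow> Q (p + i) = c - Q (q + i)" for i
  proof (induction i)
    case (Suc i)
    then show ?case using Q_Suc_reflect_if_forced[of "p + i" "q + i"] assms(2) by simp
  qed (use assms(1) in simp)
  show "e (Suc (p + i)) = 1 - e (Suc (q + i))" if "i < n"
  proof -
    from Q_run[OF less_imp_le[OF that]] assms(2)[rule_format, OF that]
    show ?thesis by (rule conjunct1[OF Q_Suc_reflect_if_forced])
  qed
qed

lemma periodic_if_return:
  assumes "0 < N" and "Q N = 1" and "\<forall>i<N. forced (Q i)"
  shows "Q m = Q (m mod N)" and "e (Suc m) = e (Suc (m mod N))"
proof -
  show Q_mod: "Q m = Q (m mod N)" for m
  proof (induction m)
    case (Suc m)
    have "forced (Q (m mod N))" using assms(1,3) by simp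
    then have "Q (Suc m) = Q (Suc (m mod N))"
      using Q_Suc_eq_if_forced[OF Suc.IH] by simp
    then show ?case using assms(2) Q_0 by (auto simp: mod_Suc)
  qed simp
  have "forced (Q (m mod N))" using assms(1,3) by simp
  then show "e (Suc m) = e (Suc (m mod N))"
    using Q_Suc_eq_if_forced[OF Q_mod[of m]] by simp
qed

theorem first_hit_antiperiodic:
  assumes "1 \<le> k" and Q_k: "Q k = u" and forced_upto_k: "\<forall>i\<le>k. forced (Q i)"
  shows "e (Suc k) = 1" and "Q (2 * k + 2) = 1"
    and "\<And>i. 1 \<le> i \<Longrightarrow> i \<le> k + 1 \<Longrightarrow> e (k + 1 + i) = 1 - e i"
    and "\<And>m. e (Suc m) = e (Suc (m mod (2 * k + 2)))"
proof -
  show e_k: "e (Suc k) = 1" using digit_eq_1[of k] Q_k by simp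
  have "Q (k + 1) = c - Q 0"
    using Q_Suc[of k] e_k Q_k Q_0 mult_u mult_c_minus_1 by simp
  note run = Q_reflect_run[OF this, of k]
  have "Q (2 * k + 1) = 1 / \<beta>"
    using run(1)[of k] Q_k c_minus_inverse forced_upto_k by (simp add: mult_2 add_ac)
  moreover from this have e_2k: "e (2 * k + 2) = 0"
    using digit_eq_0[of "2 * k + 1"] by simp
  ultimately show Q_2k: "Q (2 * k + 2) = 1"
    using Q_Suc[of "2 * k + 1"] beta_gt_1 by simp
  show "e (k + 1 + i) = 1 - e i" if "1 \<le> i" "i \<le> k + 1" for i
  proof (cases "i = k + 1")
    case True
    then show ?thesis using e_2k e_k by (simp add: mult_2)
  next
    case False
    then show ?thesis using run(2)[of "i - 1"] forced_upto_k that by simp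
  qed
  have "forced (Q i)" if "i < 2 * k + 2" for i
  proof (cases "i \<le> k")
    case False
    then have "i = k + 1 + (i - (k + 1))" "i - (k + 1) \<le> k" using that by auto
    then show ?thesis
      using run(1)[of "i - (k + 1)"] forced_upto_k forced_reflect by (metis add_0 less_imp_le)
  qed (use forced_upto_k in simp)
  then show "e (Suc m) = e (Suc (m mod (2 * k + 2)))" for m
    using periodic_if_return(2)[OF _ Q_2k] by simp
qed

end

lemma antiperiodic_word:
  fixes e :: "nat \<Rightarrow> nat"
  assumes "1 \<le> n"
    and period: "\<And>m. e (Suc m) = e (Suc (m mod (2 * n)))"
    and complement: "\<And>i. 1 \<le> i \<Longrightarrow> i \<le> n \<Longrightarrow> e (n + i) = 1 - e i"
  shows "\<forall>i\<ge>1. e i = (let j = (i - 1) mod (2 * n) + 1 in if j \<le> n then e j else 1 - e (j - n))"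
proof (intro allI impI)
  fix i :: nat
  assume "1 \<le> i"
  define j where "j = (i - 1) mod (2 * n) + 1"
  have "e i = e j" using period[of "i - 1"] \<open>1 \<le> i\<close> unfolding j_def by simp
  moreover have "j \<le> 2 * n"
    using mod_less_divisor[of "2 * n" "i - 1"] \<open>1 \<le> n\<close> unfolding j_def by linarith
  then have "n < j \<Longrightarrow> e j = 1 - e (j - n)"
    using complement[of "j - n"] by simp
  ultimately show "e i = (let j = (i - 1) mod (2 * n) + 1 in if j \<le> n then e j else 1 - e (j - n))"
    unfolding j_def[symmetric] Let_def by auto
qed

lemma unit_orbit_Qorb:
  assumes "(1 + sqrt 5) / 2 < \<beta>" and "\<beta> < 2"
  shows "unit_orbit \<beta> (quasi_greedy \<beta>) (Qorb \<beta>)"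
proof -
  have \<beta>: "1 < \<beta>" using golden_ratio_less_imp(2)[OF assms(1)] .
  consider "greedy_finite \<beta>" | "\<not> greedy_finite \<beta>" by blast
  then show ?thesis
  proof cases
    case 1
    then show ?thesis
      using assms quasi_greedy_orbit_Suc[OF \<beta> assms(2) 1] greedy_orbit_bounds[OF \<beta> assms(2)]
        greedy_orbit_pos_before_len[OF \<beta> assms(2) 1] greedy_len(1)[OF \<beta> assms(2) 1]
      by unfold_locales (simp_all add: Qorb_eq_greedy_orbit_mod[OF \<beta> assms(2) 1])
  next
    case 2
    then show ?thesis
      using assms greedy_orbit_Suc_digit[OF \<beta> assms(2)] greedy_digit_le_1[OF \<beta> assms(2)]
        greedy_orbit_bounds[OF \<beta> assms(2)] greedy_orbit_pos_if_infinite[OF \<beta> assms(2) 2]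
      by unfold_locales (simp_all add: Qorb_eq_greedy_orbit[OF \<beta> assms(2) 2] quasi_greedy_def)
  qed
qed

theorem lemma3p4:
  fixes \<beta> :: real
  assumes "(1 + sqrt 5) / 2 < \<beta>" and "\<beta> < 2"
    and "\<exists>k\<ge>1. Qorb \<beta> k = 1 / (\<beta> * (\<beta> - 1)) \<and>
           (\<forall>i. 1 \<le> i \<and> i \<le> k - 1 \<longrightarrow>
              (0 \<le> Qorb \<beta> i \<and> Qorb \<beta> i < 1 / \<beta>) \<or>
              (1 / (\<beta> * (\<beta> - 1)) < Qorb \<beta> i \<and> Qorb \<beta> i \<le> 1 / (\<beta> - 1)))"
  shows "greedy_finite \<beta> \<and>
    (\<exists>n0 \<ge> 1. \<exists>a :: nat \<Rightarrow> nat. (\<forall>i\<in>{1..n0}. a i \<in> {0, 1}) \<and> a n0 = 1 \<and>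
       (\<forall>i\<ge>1. quasi_greedy \<beta> i =
          (let j = (i - 1) mod (2 * n0) + 1 in
           if j \<le> n0 then a j else 1 - a (j - n0))))"
proof -
  interpret unit_orbit \<beta> "quasi_greedy \<beta>" "Qorb \<beta>"
    using unit_orbit_Qorb[OF assms(1,2)] .
  obtain k where "1 \<le> k" and Q_k: "Qorb \<beta> k = u"
    and before_k: "\<And>i. 1 \<le> i \<Longrightarrow> i \<le> k - 1 \<Longrightarrow> forced (Qorb \<beta> i)"
    using assms(3) unfolding forced_def by fastforce
  have "forced (Qorb \<beta> i)" if "i \<le> k" for i
    using before_k[of i] that Q_k Q_0 u_less_1 unfolding forced_def
    by (cases "i = 0 \<or> i = k") auto
  note orbit = first_hit_antiperiodic[OF \<open>1 \<le> k\<close> Q_k allI[OF impI[OF this]]]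
  have "greedy_finite \<beta>"
  proof (rule ccontr)
    assume "\<not> greedy_finite \<beta>"
    then show False
      using orbit(2) Qorb_eq_greedy_orbit[OF beta_gt_1 beta_lt_2]
        greedy_orbit_less_1[OF beta_gt_1 beta_lt_2, of "2 * k + 2"] by simp
  qed
  moreover have "\<forall>i\<in>{1..k + 1}. quasi_greedy \<beta> i \<in> {0, 1}"
  proof
    fix i :: nat
    assume "i \<in> {1..k + 1}"
    then show "quasi_greedy \<beta> i \<in> {0, 1}" using digit_le_1[of "i - 1"] by auto
  qed
  moreover have "\<forall>i\<ge>1. quasi_greedy \<beta> i = (let j = (i - 1) mod (2 * (k + 1)) + 1 in
      if j \<le> k + 1 then quasi_greedy \<beta> j else 1 - quasi_greedy \<beta> (j - (k + 1)))"
  proof (rule antiperiodic_word[OF le_add2])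
    show "quasi_greedy \<beta> (Suc m) = quasi_greedy \<beta> (Suc (m mod (2 * (k + 1))))" for m
      using orbit(4)[of m] by (simp add: algebra_simps)
  qed (rule orbit(3))
  moreover have "quasi_greedy \<beta> (k + 1) = 1" using orbit(1) by simp
  ultimately show ?thesis using le_add2[of 1 k] by blast
qed

end
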